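(* Assume the standing hypotheses (H). There is a constant $C_1>0$ depending only on $\Phi_K$, $f$ and $M$ (in particular independent of $\Omega\ge1$, $\lambda$ and $\rho$) such that $\|\rho\|_\infty\le C_1$.
   Context: Standing hypotheses (H): $K\subset\mathbb{R}^3$ is a bounded axisymmetric domain (invariant under rotations about the $x_3$-axis) satisfying the no-trapping condition (whenever $(x,y,z)\notin K$, the half line $(x,y,z)+t(x,y,0)$, $t\ge0$, lies in $\mathbb{R}^3\setminus K$). $f:[0,\infty)\to[0,\infty)$ satisfies (F1) non-negative, continuous, strictly increasing for $s>0$; (F2) $\lim_{s\to0}f(s)s^{-4/3}=0$, $\lim_{s\to\infty}f(s)s^{-4/3}=\infty$; (F3) $\liminf_{s\to\infty}f(s)s^{-\gamma}>0$ for some $\gamma>4/3$; (F4) $f\in C^1(0,\infty)$ and $\liminf_{s\to0}f'(s)s^{-\mu}>0$ for some $\mu>0$. $A(s)=s\int_0^s\frac{f(t)}{t^2}dt$. For $q>3$, $\rho_K\in L^q(K)$ is non-negative and axisymmetric and $\Phi_K(\mathbf{x})=\int_K\frac{\rho_K(\mathbf{y})}{|\mathbf{x}-\mathbf{y}|}d\mathbf{y}$. $M>0$; $\Omega\ge1$ is a constant. For $\rho$ on $\mathbb{R}^3\setminus K$, $B\rho(\mathbf{x})=\int_{\mathbb{R}^3\setminus K}\frac{\rho(\mathbf{y})}{|\mathbf{x}-\mathbf{y}|}d\mathbf{y}$. $\rho:\mathbb{R}^3\setminus K\to[0,\infty)$ is bounded and continuous with $\int\rho=M$, and there is a constant $\lambda$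 such that $A'(\rho)-B\rho-\frac12\Omega^2r^2-\Phi_K=\lambda$ on $\{\rho>0\}$, where $r=\sqrt{x_1^2+x_2^2}$. *)

theory Defs
  imports "HOL-Analysis.Analysis"
begin

type_synonym pt = "real ^ 3"

definition rot3 :: "real \<Rightarrow> pt \<Rightarrow> pt" where
  "rot3 th x = vector [cos th * x$1 - sin th * x$2, sin th * x$1 + cos th * x$2, x$3]"

definition cyl_r :: "pt \<Rightarrow> real" where
  "cyl_r x = sqrt ((x$1)^2 + (x$2)^2)"

definition axisym_set :: "pt set \<Rightarrow> bool" where
  "axisym_set K \<longleftrightarrow> (\<forall>th x. x \<in> K \<longrightarrow> rot3 th x \<in> K)"

definition axisym_fun_on :: "pt set \<Rightarrow> (pt \<Rightarrow> real) \<Rightarrow> bool" where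
  "axisym_fun_on K g \<longleftrightarrow> (\<forall>th x. x \<in> K \<longrightarrow> g (rot3 th x) = g x)"

definition no_trapping :: "pt set \<Rightarrow> bool" where
  "no_trapping K \<longleftrightarrow>
     (\<forall>x. x \<notin> K \<longrightarrow> (\<forall>t\<ge>0. x + t *\<^sub>R vector [x$1, x$2, 0] \<notin> K))"

definition in_Lq :: "real \<Rightarrow> pt set \<Rightarrow> (pt \<Rightarrow> real) \<Rightarrow> bool" where
  "in_Lq q K g \<longleftrightarrow> set_borel_measurable lebesgue K g
      \<and> set_integrable lebesgue K (\<lambda>y. \<bar>g y\<bar> powr q)"

definition A_fun :: "(real \<Rightarrow> real) \<Rightarrow> real \<Rightarrow> real" where
  "A_fun f s = s * (LBINT t=0..s. f t / t^2)"

definition newton_pot :: "pt set \<Rightarrow> (pt \<Rightarrow> real) \<Rightarrow> pt \<Rightarrow> real" where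
  "newton_pot S g x = (LINT y:S|lebesgue. g y / dist x y)"

definition F_hyps :: "(real \<Rightarrow> real) \<Rightarrow> bool" where
  "F_hyps f \<longleftrightarrow>
     (\<forall>s\<ge>0. f s \<ge> 0) \<and> continuous_on {0..} f \<and> strict_mono_on {0<..} f
   \<and> ((\<lambda>s. f s / s powr (4/3)) \<longlongrightarrow> 0) (at_right 0)
   \<and> filterlim (\<lambda>s. f s / s powr (4/3)) at_top at_top
   \<and> (\<exists>\<gamma>>4/3. Liminf at_top (\<lambda>s. ereal (f s / s powr \<gamma>)) > 0)
   \<and> f C1_differentiable_on {0<..}
   \<and> (\<exists>\<mu>>0. Liminf (at_right 0) (\<lambda>s. ereal (deriv f s / s powr \<mu>)) > 0)"

end

theory Submission
  imports Defs
begin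

(* The argument has four ingredients.
   (1) Potential estimates.  Splitting 1/|x-y| into a near part (integrated against the dyadic
       decomposition of a ball) and a far part, one gets
         B rho <= C * S^(1/3) * M^(2/3)        (S bounds rho, M = mass of rho),
       and by Young's inequality Phi_K <= C_K for rho_K in L^q, q > 3.
   (2) The enthalpy.  A'(s) = F(s) + f(s)/s with F(s) = int_0^s f(t)/t^2; hence
       A'(s) >= f(s)/s, A' is bounded on (0,S] and A'(s) -> 0 as s -> 0.
   (3) Geometry.  Following the outward horizontal ray from a support point (it stays outside K
       by no-trapping) shows lam + Omega^2 r^2/2 <= 0 on the support: otherwise A'(rho) would
       stay above a positive constant along the ray, contradicting either the boundedness of A'
       or A'(s) -> 0 where rho reaches 0.
   (4) Combining: at a point where rho > S/2, f(rho)/rho <= B rho + Phi_K <= C S^(1/3) + C_K,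
       while f(s)/s^(4/3) -> infinity; this bounds S independently of Omega, lam and rho.
   The lemmas below follow this order; the main theorem, assembled last, only has to produce
   C_K and the growth threshold T. *)

lemma dyadic_shell:
  fixes d R :: real
  assumes "0 < d" "d < R"
  shows "\<exists>k::nat. R / 2^(k+1) \<le> d \<and> d < R / 2^k"
proof -
  have "\<exists>n::nat. R/d \<le> 2^n" using real_arch_pow[of 2 "R/d"] by (auto intro: less_imp_le)
  define m where "m = (LEAST n::nat. R/d \<le> 2^n)"
  have m: "R/d \<le> 2^m" unfolding m_def by (rule LeastI_ex) fact
  have "m \<noteq> 0" using m assms by (cases m) auto
  then obtain k where k: "m = Suc k" by (cases m) auto
  have "\<not> R/d \<le> 2^k" using k unfolding m_def by (metis Least_le Suc_n_not_le_n)
  with m k assms show ?thesis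
    by (intro exI[of _ k]) (auto simp: field_simps)
qed

(* Weight of the k-th dyadic shell: kernel value at its inner radius times the volume scale of
   its outer radius, in dimension n; it decays geometrically when p < n. *)
lemma dyadic_shell_weight:
  fixes R p :: real and k n :: nat
  assumes "R > 0"
  shows "(R/2^(k+1)) powr (-p) * (R/2^k)^n = 2 powr p * R powr (n-p) * (2 powr (p-n))^k"
proof -
  have "(R/2^(k+1)) powr (-p) = exp (-p * (ln R - (k+1) * ln 2))"
    using assms by (simp add: powr_def ln_div ln_realpow del: power_Suc)
  moreover have "(R/2^k)^n = exp (n * (ln R - k * ln 2))"
    using assms by (simp add: powr_def ln_div ln_realpow flip: powr_realpow)
  moreover have "(2 powr (p-n))^k = exp (k * ((p-n) * ln 2))"
    by (simp add: powr_def flip: exp_of_nat_mult)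
  moreover have "2 powr p * R powr (n-p) = exp (p * ln 2 + (n-p) * ln R)"
    using assms by (simp add: powr_def exp_add)
  ultimately show ?thesis by (simp flip: exp_add) (simp add: algebra_simps)
qed

(* The constant in the local kernel estimate: the integral of |x-y|^(-p) over a ball of radius R
   in R^n is at most kernel_const n p * R^(n-p). *)
definition kernel_const :: "nat \<Rightarrow> real \<Rightarrow> real" where
  "kernel_const n p = unit_ball_vol n * 2 powr p / (1 - 2 powr (p - n))"

lemma kernel_const_pos: "p < real n \<Longrightarrow> 0 < kernel_const n p"
proof -
  assume "p < real n"
  hence "2 powr (p - n) < (2::real) powr 0" by (intro powr_less_mono) auto
  thus ?thesis by (simp add: kernel_const_def)
qed

lemma ball_kernel_measurable:
  fixes x :: "'a::euclidean_space"
  shows "(\<lambda>y. indicator (ball x R) y * ennreal (dist x y powr (-p))) \<in> borel_measurable lebesgue"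
proof -
  have [measurable]: "(\<lambda>y. dist x y) \<in> borel_measurable lborel" by measurable
  show ?thesis
    by (intro measurable_completion borel_measurable_times_ennreal borel_measurable_indicator)
       (auto intro: powr_real_measurable)
qed

lemma ball_kernel_domination:
  fixes x y :: "'a::euclidean_space" and p R :: real
  assumes "0 < p" "0 < R"
  shows "indicator (ball x R) y * ennreal (dist x y powr (-p))
      \<le> (\<Sum>k. ennreal ((R/2^(k+1)) powr (-p)) * indicator (ball x (R/2^k)) y)"
proof (cases "y \<in> ball x R \<and> y \<noteq> x")
  case True
  then have "0 < dist x y" "dist x y < R" by auto
  then obtain k where k: "R/2^(k+1) \<le> dist x y" "dist x y < R/2^k"
    using dyadic_shell by blast
  have "dist x y powr (-p) \<le> (R/2^(k+1)) powr (-p)"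
    by (rule powr_mono2') (use assms k in auto)
  hence "indicator (ball x R) y * ennreal (dist x y powr (-p))
      \<le> ennreal ((R/2^(k+1)) powr (-p)) * indicator (ball x (R/2^k)) y"
    using True k by (auto simp: ennreal_leI)
  also have "\<dots> \<le> (\<Sum>k. ennreal ((R/2^(k+1)) powr (-p)) * indicator (ball x (R/2^k)) y)"
    using sum_le_suminf[OF summableI, of "{k}"] by simp
  finally show ?thesis .
qed auto

lemma ball_kernel_nn_integral:
  fixes x :: "'a::euclidean_space" and p R :: real
  assumes p: "0 < p" "p < DIM('a)" and R: "0 < R"
  shows "(\<integral>\<^sup>+y. indicator (ball x R) y * ennreal (dist x y powr (-p)) \<partial>lebesgue)
     \<le> ennreal (kernel_const DIM('a) p * R powr (DIM('a) - p))"
proof -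
  define n where "n = DIM('a)"
  define q where "q = 2 powr (p - n)"
  define w where "w = unit_ball_vol n * 2 powr p * R powr (n - p)"
  have "q < 2 powr 0" unfolding q_def using p by (intro powr_less_mono) (auto simp: n_def)
  hence q: "0 \<le> q" "q < 1" by (auto simp: q_def)
  have w: "0 \<le> w" by (simp add: w_def)
  have shell: "ennreal ((R/2^(k+1)) powr (-p)) * emeasure lborel (ball x (R/2^k)) = ennreal (w * q^k)"
    for k :: nat
  proof -
    have e: "emeasure lborel (ball x (R/2^k)) = ennreal (unit_ball_vol n * (R/2^k)^n)"
      using R emeasure_ball[of "R/2^k" x] by (simp add: n_def)
    have "0 \<le> unit_ball_vol n * (R/2^k)^n" using R by simp
    then have "ennreal ((R/2^(k+1)) powr (-p)) * emeasure lborel (ball x (R/2^k))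
        = ennreal (unit_ball_vol n * ((R/2^(k+1)) powr (-p) * (R/2^k)^n))"
      unfolding e by (subst ennreal_mult[symmetric]) (auto simp: mult_ac)
    also have "\<dots> = ennreal (w * q^k)"
      using dyadic_shell_weight[OF R] by (simp add: w_def q_def mult.assoc)
    finally show ?thesis .
  qed
  have "(\<integral>\<^sup>+y. indicator (ball x R) y * ennreal (dist x y powr (-p)) \<partial>lebesgue)
      = (\<integral>\<^sup>+y. indicator (ball x R) y * ennreal (dist x y powr (-p)) \<partial>lborel)"
    by (rule nn_integral_completion)
  also have "\<dots> \<le> (\<integral>\<^sup>+y. (\<Sum>k. ennreal ((R/2^(k+1)) powr (-p)) * indicator (ball x (R/2^k)) y) \<partial>lborel)"
    by (intro nn_integral_mono ball_kernel_domination p R)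
  also have "\<dots> = (\<Sum>k. \<integral>\<^sup>+y. ennreal ((R/2^(k+1)) powr (-p)) * indicator (ball x (R/2^k)) y \<partial>lborel)"
    by (rule nn_integral_suminf) (measurable, simp add: pred_def)
  also have "\<dots> = (\<Sum>k. ennreal ((R/2^(k+1)) powr (-p)) * emeasure lborel (ball x (R/2^k)))"
    by (simp add: nn_integral_cmult_indicator)
  also have "\<dots> = ennreal (\<Sum>k. w * q^k)"
    using shell q w by (simp only: shell, intro suminf_ennreal2) (auto intro: summable_mult)
  also have "(\<Sum>k. w * q^k) = kernel_const n p * R powr (n - p)"
    using suminf_mult[of "\<lambda>k. q^k" w] suminf_geometric[of q] q
    by (simp add: kernel_const_def w_def q_def)
  finally show ?thesis by (simp add: n_def)
qed

lemma newton_pot_nonneg: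
  assumes "\<forall>y\<in>U. 0 \<le> g y"
  shows "0 \<le> newton_pot U g x"
  unfolding newton_pot_def set_lebesgue_integral_def
  by (rule Bochner_Integration.integral_nonneg) (use assms in \<open>auto simp: indicator_def\<close>)

lemma newton_pot_le_of_nn_integral:
  fixes U :: "pt set" and g :: "pt \<Rightarrow> real"
  assumes meas: "set_borel_measurable lebesgue U g" and nn: "\<forall>y\<in>U. 0 \<le> g y"
    and bound: "(\<integral>\<^sup>+y. ennreal (indicator U y * (g y / dist x y)) \<partial>lebesgue) \<le> ennreal B"
    and B: "0 \<le> B"
  shows "newton_pot U g x \<le> B"
proof -
  define h where "h y = indicator U y * (g y / dist x y)" for y
  have "(\<lambda>y. dist x y) \<in> borel_measurable lebesgue"
    by (intro measurable_completion) measurable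
  moreover have "(\<lambda>y. indicator U y * g y) \<in> borel_measurable lebesgue"
    using meas by (simp add: set_borel_measurable_def)
  moreover have h_eq: "h = (\<lambda>y. indicator U y * g y / dist x y)" by (auto simp: h_def)
  ultimately have h_meas: "h \<in> borel_measurable lebesgue" by simp
  have h_nn: "0 \<le> h y" for y using nn by (auto simp: h_def indicator_def)
  have int: "integrable lebesgue h"
    using bound h_meas h_nn
    by (intro integrableI_nonneg) (auto simp: h_def top.not_eq_extremum intro: le_less_trans)
  have "ennreal (integral\<^sup>L lebesgue h) \<le> ennreal B"
    using nn_integral_eq_integral[OF int] h_nn bound by (simp add: h_def)
  moreover have "newton_pot U g x = integral\<^sup>L lebesgue h"
    by (simp add: newton_pot_def set_lebesgue_integral_def h_eq)
  ultimately show ?thesis using B by (simp add: ennreal_le_iff)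
qed

(* Young's inequality applied to a * (1/d), with the singular part cut off at d = 1. *)
lemma potential_young_split:
  fixes a d q :: real
  assumes a: "0 \<le> a" and d: "0 \<le> d" and q: "1 < q"
  shows "a / d \<le> a powr q + (if d < 1 then d powr (-(q/(q-1))) else 0) + 1"
proof (cases "d = 0")
  case False
  define e where "e = min d 1"
  define q' where "q' = q/(q-1)"
  have e: "0 < e" "e \<le> d" using False d by (auto simp: e_def)
  have q': "1 < q'" "1/q + 1/q' = 1" using q by (auto simp: q'_def field_simps)
  have "a / d \<le> a * (1/e)"
    using a e by (simp add: divide_left_mono)
  also have "\<dots> \<le> a powr q / q + (1/e) powr q' / q'"
    by (rule Youngs_inequality) (use q q' a e in auto)
  also have "\<dots> \<le> a powr q + e powr (-q')"
  proof (intro add_mono)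
    show "a powr q / q \<le> a powr q" using q by (simp add: divide_le_eq mult_le_cancel_left1)
    show "(1/e) powr q' / q' \<le> e powr (-q')"
      using q' e by (simp add: powr_divide powr_minus_divide divide_le_eq mult_le_cancel_left1)
  qed
  also have "e powr (-q') \<le> (if d < 1 then d powr (-q') else 0) + 1"
    by (auto simp: e_def)
  finally show ?thesis by (simp only: q'_def add.assoc)
qed simp

lemma nn_integral_set_density:
  fixes g :: "'a \<Rightarrow> real"
  assumes int: "set_integrable M U g" and nn: "\<forall>y\<in>U. 0 \<le> g y"
  shows "(\<integral>\<^sup>+y. ennreal (indicator U y * g y) \<partial>M) = ennreal (LINT y:U|M. g y)"
    and "0 \<le> (LINT y:U|M. g y)"
proof -
  have "integrable M (\<lambda>y. indicator U y * g y)" using int by (simp add: set_integrable_def)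
  from nn_integral_eq_integral[OF this] nn
  show "(\<integral>\<^sup>+y. ennreal (indicator U y * g y) \<partial>M) = ennreal (LINT y:U|M. g y)"
    by (simp add: indicator_def set_lebesgue_integral_def)
  show "0 \<le> (LINT y:U|M. g y)"
    unfolding set_lebesgue_integral_def
    by (rule Bochner_Integration.integral_nonneg) (use nn in \<open>auto simp: indicator_def\<close>)
qed

(* Pointwise form of the Young splitting for the integrand of the potential of rho_K, for K
   inside ball 0 B: an L^q part, a locally integrable kernel part and a bounded part. *)
lemma Lq_integrand_bound:
  fixes K :: "pt set" and \<rho>K :: "pt \<Rightarrow> real"
  assumes nn: "\<forall>y\<in>K. 0 \<le> \<rho>K y" and q: "1 < q" and B: "K \<subseteq> ball 0 B"
  shows "ennreal (indicator K y * (\<rho>K y / dist x y))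
    \<le> ennreal (indicator K y * \<bar>\<rho>K y\<bar> powr q)
      + indicator (ball x 1) y * ennreal (dist x y powr (-(q/(q-1)))) + indicator (ball 0 B) y"
proof (cases "y \<in> K")
  case True
  have "\<rho>K y / dist x y \<le> \<rho>K y powr q + (if dist x y < 1 then dist x y powr (-(q/(q-1))) else 0) + 1"
    by (rule potential_young_split) (use nn True q in auto)
  then have "ennreal (\<rho>K y / dist x y)
      \<le> ennreal (\<rho>K y powr q + (if dist x y < 1 then dist x y powr (-(q/(q-1))) else 0) + 1)"
    by (rule ennreal_leI)
  also have "\<dots> = ennreal (indicator K y * \<bar>\<rho>K y\<bar> powr q)
      + indicator (ball x 1) y * ennreal (dist x y powr (-(q/(q-1)))) + indicator (ball 0 B) y"
    using True B nn by (auto simp: ennreal_plus indicator_def dist_commute)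
  finally show ?thesis using True by simp
qed simp

lemma newton_pot_Lq_bounded:
  fixes K :: "pt set" and \<rho>K :: "pt \<Rightarrow> real" and q :: real
  assumes K: "bounded K" and q: "3 < q" and Lq: "in_Lq q K \<rho>K" and nn: "\<forall>y\<in>K. 0 \<le> \<rho>K y"
  shows "\<exists>C\<ge>0. \<forall>x. newton_pot K \<rho>K x \<le> C"
proof -
  obtain B where B: "0 < B" "K \<subseteq> ball 0 B" using bounded_subset_ballD[OF K, of 0] by auto
  define p where "p = q/(q-1)"
  have p: "0 < p" "p < 3" using q by (auto simp: p_def field_simps)
  have Lq_int: "set_integrable lebesgue K (\<lambda>y. \<bar>\<rho>K y\<bar> powr q)" using Lq by (simp add: in_Lq_def)
  define I where "I = (LINT y:K|lebesgue. \<bar>\<rho>K y\<bar> powr q)"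
  note I = nn_integral_set_density[OF Lq_int, folded I_def]
  define C where "C = I + kernel_const 3 p + unit_ball_vol 3 * B^3"
  have C: "0 \<le> C" using I(2) kernel_const_pos[of p 3] p B by (simp add: C_def)
  have "newton_pot K \<rho>K x \<le> C" for x
  proof (rule newton_pot_le_of_nn_integral)
    define G where "G = (\<lambda>y. ennreal (indicator K y * \<bar>\<rho>K y\<bar> powr q))"
    define k where "k = (\<lambda>y. indicator (ball x 1) y * ennreal (dist x y powr (-p)))"
    have meas: "G \<in> borel_measurable lebesgue" "k \<in> borel_measurable lebesgue"
      using Lq_int ball_kernel_measurable[of x 1 p] by (simp_all add: G_def k_def set_integrable_def)
    have ball_meas: "(indicator (ball (0::pt) B) :: pt \<Rightarrow> ennreal) \<in> borel_measurable lebesgue"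
      by (intro measurable_completion) (simp add: borel_measurable_indicator)
    have "(\<integral>\<^sup>+y. ennreal (indicator K y * (\<rho>K y / dist x y)) \<partial>lebesgue)
        \<le> (\<integral>\<^sup>+y. G y + k y + indicator (ball 0 B) y \<partial>lebesgue)"
      using Lq_integrand_bound[OF nn _ B(2)] q by (intro nn_integral_mono) (simp add: G_def k_def p_def)
    also have "\<dots> = ennreal I + (\<integral>\<^sup>+y. k y \<partial>lebesgue) + emeasure lebesgue (ball (0::pt) B)"
      using nn_integral_add[OF borel_measurable_add[OF meas] ball_meas] nn_integral_add[OF meas]
      by (simp add: G_def I(1))
    also have "\<dots> \<le> ennreal I + ennreal (kernel_const 3 p) + ennreal (unit_ball_vol 3 * B^3)"
      using ball_kernel_nn_integral[of p 1 x] p B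
      by (intro add_mono) (auto simp: k_def emeasure_ball emeasure_completion)
    also have "\<dots> = ennreal C"
      using I(2) kernel_const_pos[of p 3] p B by (simp add: C_def ennreal_plus)
    finally show "(\<integral>\<^sup>+y. ennreal (indicator K y * (\<rho>K y / dist x y)) \<partial>lebesgue) \<le> ennreal C" .
  qed (use Lq nn C in \<open>auto simp: in_Lq_def\<close>)
  with C show ?thesis by blast
qed

lemma near_far_split:
  fixes a S d R :: real
  assumes a: "0 \<le> a" "a \<le> S" and R: "0 < R" and d: "0 \<le> d"
  shows "a / d \<le> S * (if d < R then d powr (-1) else 0) + a / R"
proof (cases "d < R")
  case True
  have "a / d \<le> S * d powr (-1)"
    using a d by (cases "d = 0") (auto simp: powr_minus divide_inverse mult_right_mono)
  moreover have "0 \<le> a / R" using a R by simp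
  ultimately show ?thesis using True by simp
next
  case False
  then show ?thesis using a R by (simp add: divide_left_mono)
qed

lemma near_far_integrand_bound:
  fixes U :: "pt set" and \<rho> :: "pt \<Rightarrow> real"
  assumes nn: "\<forall>y\<in>U. 0 \<le> \<rho> y" and ub: "\<forall>y\<in>U. \<rho> y \<le> S" and S: "0 \<le> S" and R: "0 < R"
  shows "ennreal (indicator U y * (\<rho> y / dist x y))
    \<le> ennreal S * (indicator (ball x R) y * ennreal (dist x y powr (-1)))
      + ennreal (1/R) * ennreal (indicator U y * \<rho> y)"
proof (cases "y \<in> U")
  case True
  have "\<rho> y / dist x y \<le> S * (if dist x y < R then dist x y powr (-1) else 0) + \<rho> y / R"
    by (rule near_far_split) (use nn ub R True in auto)
  then have "ennreal (\<rho> y / dist x y)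
      \<le> ennreal (S * (if dist x y < R then dist x y powr (-1) else 0) + \<rho> y / R)"
    by (rule ennreal_leI)
  also have "\<dots> = ennreal S * (indicator (ball x R) y * ennreal (dist x y powr (-1)))
      + ennreal (1/R) * ennreal (indicator U y * \<rho> y)"
    using True nn S R by (auto simp: indicator_def dist_commute ennreal_plus simp flip: ennreal_mult)
  finally show ?thesis using True by simp
qed simp

(* Potential of a bounded density of finite mass: near part <= S * kernel integral, far part
   <= M / R. *)
lemma newton_pot_sup_mass_radius:
  fixes U :: "pt set" and \<rho> :: "pt \<Rightarrow> real"
  assumes nn: "\<forall>y\<in>U. 0 \<le> \<rho> y" and ub: "\<forall>y\<in>U. \<rho> y \<le> S" and S: "0 \<le> S"
    and int: "set_integrable lebesgue U \<rho>" and mass: "(LINT y:U|lebesgue. \<rho> y) = M"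
    and R: "0 < R"
  shows "newton_pot U \<rho> x \<le> kernel_const 3 1 * S * R^2 + M / R"
proof -
  note M = nn_integral_set_density[OF int nn, unfolded mass]
  define g where "g = (\<lambda>y. ennreal (indicator U y * \<rho> y))"
  define k where "k = (\<lambda>y. indicator (ball x R) y * ennreal (dist x y powr (-1)))"
  have meas: "g \<in> borel_measurable lebesgue" "k \<in> borel_measurable lebesgue"
    using int ball_kernel_measurable[of x R 1] by (simp_all add: g_def k_def set_integrable_def)
  have "(\<integral>\<^sup>+y. ennreal (indicator U y * (\<rho> y / dist x y)) \<partial>lebesgue)
      \<le> (\<integral>\<^sup>+y. ennreal S * k y + ennreal (1/R) * g y \<partial>lebesgue)"
    using near_far_integrand_bound[OF nn ub S R] by (intro nn_integral_mono) (simp add: g_def k_def)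
  also have "\<dots> = ennreal S * (\<integral>\<^sup>+y. k y \<partial>lebesgue) + ennreal (1/R) * ennreal M"
    using meas M(1) by (simp add: nn_integral_add nn_integral_cmult g_def)
  also have "\<dots> \<le> ennreal S * ennreal (kernel_const 3 1 * R^2) + ennreal (1/R) * ennreal M"
    using ball_kernel_nn_integral[of 1 R x] R by (intro add_mono mult_left_mono) (auto simp: k_def)
  also have "\<dots> = ennreal (kernel_const 3 1 * S * R^2 + M / R)"
  proof -
    have "ennreal S * ennreal (kernel_const 3 1 * R^2) = ennreal (S * (kernel_const 3 1 * R^2))"
      by (rule ennreal_mult[symmetric]) (use S kernel_const_pos[of 1 3] in auto)
    moreover have "ennreal (1/R) * ennreal M = ennreal (1/R * M)"
      by (rule ennreal_mult[symmetric]) (use R M(2) in auto)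
    ultimately show ?thesis using S R M(2) kernel_const_pos[of 1 3] by (simp add: ennreal_plus mult_ac)
  qed
  finally show ?thesis
    using int nn S R M(2) kernel_const_pos[of 1 3]
    by (intro newton_pot_le_of_nn_integral) (auto simp: set_integrable_def set_borel_measurable_def)
qed

lemma optimal_radius:
  fixes S M :: real
  assumes S: "0 < S" and M: "0 < M"
  shows "S * ((M/S) powr (1/3))^2 = S powr (1/3) * M powr (2/3)"
    and "M / (M/S) powr (1/3) = S powr (1/3) * M powr (2/3)"
proof -
  define a where "a = S powr (1/3)"
  define b where "b = M powr (1/3)"
  have ab: "0 < a" "0 < b" using S M by (simp_all add: a_def b_def)
  have cube: "S = a^3" "M = b^3"
    using S M by (simp_all add: a_def b_def powr_powr flip: powr_realpow)
  have radius: "(M/S) powr (1/3) = b / a" using S M by (simp add: a_def b_def powr_divide)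
  have square: "M powr (2/3) = b^2"
    using M by (simp add: b_def powr_powr flip: powr_realpow)
  show "S * ((M/S) powr (1/3))^2 = S powr (1/3) * M powr (2/3)"
    unfolding radius square a_def[symmetric] using ab
    by (subst (1) cube(1)) (simp add: field_simps power2_eq_square power3_eq_cube)
  show "M / (M/S) powr (1/3) = S powr (1/3) * M powr (2/3)"
    unfolding radius square a_def[symmetric] using ab
    by (subst (1) cube(2)) (simp add: field_simps power2_eq_square power3_eq_cube)
qed

lemma newton_pot_sup_mass_bound:
  fixes U :: "pt set" and \<rho> :: "pt \<Rightarrow> real"
  assumes nn: "\<forall>y\<in>U. 0 \<le> \<rho> y" and ub: "\<forall>y\<in>U. \<rho> y \<le> S" and S: "0 < S"
    and int: "set_integrable lebesgue U \<rho>" and mass: "(LINT y:U|lebesgue. \<rho> y) = M"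
    and M: "0 < M"
  shows "newton_pot U \<rho> x \<le> (kernel_const 3 1 + 1) * S powr (1/3) * M powr (2/3)"
proof -
  define R where "R = (M/S) powr (1/3)"
  have "newton_pot U \<rho> x \<le> kernel_const 3 1 * (S * R^2) + M / R"
    using newton_pot_sup_mass_radius[OF nn ub _ int mass, of R x] S M by (simp add: R_def mult.assoc)
  also have "\<dots> = (kernel_const 3 1 + 1) * S powr (1/3) * M powr (2/3)"
    unfolding R_def optimal_radius[OF S M] by (simp add: algebra_simps)
  finally show ?thesis .
qed

lemma integral_powr_neg_two_thirds:
  fixes s :: real
  assumes s: "s > 0"
  shows "set_integrable lborel {0<..<s} (\<lambda>t::real. t powr (-2/3))"
    and "(LBINT t=0..s. t powr (-2/3)) = 3 * s powr (1/3)"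
proof -
  define F where "F x = 3 * x powr (1/3)" for x :: real
  have deriv_F: "DERIV F x :> x powr (-2/3)" if "0 < ereal x" "ereal x < ereal s" for x
  proof -
    have x: "x > 0" using that by simp
    have "DERIV F x :> 3 * (1/3 * x powr (1/3 - 1))"
      unfolding F_def by (intro DERIV_cmult has_real_derivative_powr x)
    thus ?thesis by simp
  qed
  have cont: "isCont (\<lambda>t. t powr (-2/3)) x" if "0 < ereal x" "ereal x < ereal s" for x
  proof -
    have x: "x > 0" using that by simp
    show ?thesis by (rule continuous_intros) (use x in auto)
  qed
  have F_at_0: "((F \<circ> real_of_ereal) \<longlongrightarrow> 0) (at_right (ereal 0))"
  proof -
    have "((\<lambda>x. x powr (1/3)) \<longlongrightarrow> (0::real)) (at_right 0)"
      by (rule tendsto_zero_powrI) (auto intro: tendsto_ident_at eventually_at_rightI[of 0 1])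
    hence "(F \<longlongrightarrow> 0) (at_right 0)" unfolding F_def using tendsto_mult_left[of _ 0 _ 3] by force
    thus ?thesis by (simp add: ereal_tendsto_simps)
  qed
  have F_at_s: "((F \<circ> real_of_ereal) \<longlongrightarrow> 3 * s powr (1/3)) (at_left (ereal s))"
  proof -
    have "(F \<longlongrightarrow> F s) (at s)" unfolding F_def using s by (intro tendsto_intros) auto
    hence "(F \<longlongrightarrow> F s) (at_left s)" by (rule filterlim_mono) (auto simp: at_le)
    thus ?thesis by (simp add: ereal_tendsto_simps F_def)
  qed
  have FTC: "set_integrable lborel (einterval (ereal 0) (ereal s)) (\<lambda>t. t powr (-2/3))"
      "(LBINT x=ereal 0..ereal s. x powr (-2/3)) = 3 * s powr (1/3) - 0"
    by (rule interval_integral_FTC_nonneg[OF _ deriv_F cont _ F_at_0 F_at_s]; use s in auto)+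
  show "set_integrable lborel {0<..<s} (\<lambda>t::real. t powr (-2/3))" using FTC(1) by simp
  show "(LBINT t=0..s. t powr (-2/3)) = 3 * s powr (1/3)" using FTC(2) by (simp add: zero_ereal_def)
qed

lemma f_small_near_zero:
  assumes FH: "F_hyps f" and e: "\<epsilon> > 0"
  shows "\<exists>\<delta>>0. \<delta> \<le> 1 \<and> (\<forall>t. 0 < t \<and> t < \<delta> \<longrightarrow> f t \<le> \<epsilon> * t powr (4/3))"
proof -
  have lim: "((\<lambda>s. f s / s powr (4/3)) \<longlongrightarrow> 0) (at_right 0)" using FH by (simp add: F_hyps_def)
  have "eventually (\<lambda>s. f s / s powr (4/3) < \<epsilon>) (at_right 0)"
    using order_tendstoD(2)[OF lim e] .
  then obtain b where b: "b > 0" "\<forall>y>0. y < b \<longrightarrow> f y / y powr (4/3) < \<epsilon>"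
    unfolding eventually_at_right_field by auto
  show ?thesis
  proof (intro exI[of _ "min b 1"] conjI allI impI)
    fix t assume t: "0 < t \<and> t < min b 1"
    hence "f t / t powr (4/3) < \<epsilon>" using b by auto
    thus "f t \<le> \<epsilon> * t powr (4/3)" using t by (simp add: divide_less_eq)
  qed (use b in auto)
qed

lemma integrand_small:
  fixes f :: "real \<Rightarrow> real" and t e :: real
  assumes "f t \<le> e * t powr (4/3)" "t > 0"
  shows "f t / t^2 \<le> e * t powr (-2/3)"
proof -
  have "t^2 = t powr 2" using assms(2) by (simp add: powr_realpow)
  have "f t / t^2 \<le> e * t powr (4/3) / t powr 2" using assms \<open>t^2 = t powr 2\<close> by (simp add: divide_right_mono)
  also have "\<dots> = e * (t powr (4/3) / t powr 2)" by simp
  also have "t powr (4/3) / t powr 2 = t powr (-2/3)" using powr_diff[of t "4/3" 2] by simp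
  finally show ?thesis by simp
qed

lemma integrand_continuous:
  assumes FH: "F_hyps f" and "0 < c"
  shows "continuous_on {c..b} (\<lambda>t. f t / t^2)"
proof -
  have "continuous_on {0..} f" using FH by (simp add: F_hyps_def)
  hence "continuous_on {c..b} f" by (rule continuous_on_subset) (use assms in auto)
  thus ?thesis by (intro continuous_intros) (use assms in auto)
qed

(* f(t)/t^2 is integrable on (0,b): near 0 by comparison with t^(-2/3), elsewhere by continuity. *)
lemma integrand_integrable:
  assumes FH: "F_hyps f" and b: "b > 0"
  shows "set_integrable lborel {0<..<b} (\<lambda>t. f t / t^2)"
proof -
  obtain \<delta> where d: "\<delta> > 0" "\<forall>t. 0 < t \<and> t < \<delta> \<longrightarrow> f t \<le> 1 * t powr (4/3)"
    using f_small_near_zero[OF FH, of 1] by auto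
  define d where "d = min \<delta> b / 2"
  have d0: "d > 0" "d < b" "d < \<delta>" using d b by (auto simp: d_def)
  have f0: "\<forall>s\<ge>0. f s \<ge> 0" using FH by (simp add: F_hyps_def)
  have fc: "continuous_on {0..} f" using FH by (simp add: F_hyps_def)
  have i1: "set_integrable lborel {0<..<d} (\<lambda>t. f t / t^2)"
  proof (rule set_integrable_bound[OF integral_powr_neg_two_thirds(1)[OF d0(1)]])
    have "continuous_on {0<..<d} (\<lambda>t. f t / t^2)"
    proof -
      have "continuous_on {0<..<d} f" by (rule continuous_on_subset[OF fc]) auto
      thus ?thesis by (intro continuous_intros) auto
    qed
    thus "set_borel_measurable lborel {0<..<d} (\<lambda>t. f t / t^2)"
      unfolding set_borel_measurable_def
      by (simp only: measurable_lborel2) (rule borel_measurable_continuous_on_indicator; auto)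
    show "AE x in lborel. x \<in> {0<..<d} \<longrightarrow> norm (f x / x^2) \<le> norm (x powr (-2/3))"
    proof (rule AE_I2, rule impI)
      fix x assume x: "x \<in> {0<..<d}"
      have "f x / x^2 \<le> 1 * x powr (-2/3)" by (rule integrand_small) (use x d d0 in auto)
      moreover have "0 \<le> f x / x^2" using f0 x by simp
      ultimately show "norm (f x / x^2) \<le> norm (x powr (-2/3))" by simp
    qed
  qed
  have i2: "set_integrable lborel {d..b} (\<lambda>t. f t / t^2)"
    by (rule borel_integrable_atLeastAtMost') (rule integrand_continuous[OF FH d0(1)])
  have "set_integrable lborel ({0<..<d} \<union> {d..b}) (\<lambda>t. f t / t^2)"
    by (rule set_integrable_Un[OF i1 i2]) auto
  thus ?thesis by (rule set_integrable_subset) auto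
qed

definition F_int :: "(real \<Rightarrow> real) \<Rightarrow> real \<Rightarrow> real" where
  "F_int f s = (LBINT t=0..s. f t / t^2)"

lemma F_int_Ioo: "s > 0 \<Longrightarrow> F_int f s = (LBINT t:{0<..<s}. f t / t^2)"
  unfolding F_int_def by (subst interval_integral_Ioo) auto

lemma F_int_split:
  assumes FH: "F_hyps f" and c: "0 < c" "c < u"
  shows "F_int f u = F_int f c + (LBINT t=c..u. f t / t^2)"
proof -
  have "min (ereal 0) (min (ereal c) (ereal u)) = ereal 0"
    and "max (ereal 0) (max (ereal c) (ereal u)) = ereal u" using c by auto
  moreover have "set_integrable lborel {0<..<u} (\<lambda>t. f t / t^2)"
    by (rule integrand_integrable[OF FH]) (use c in auto)
  ultimately have "interval_lebesgue_integrable lborel (min (ereal 0) (min (ereal c) (ereal u)))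
      (max (ereal 0) (max (ereal c) (ereal u))) (\<lambda>t. f t / t^2)"
    using c by (simp add: interval_lebesgue_integrable_def)
  from interval_integral_sum[OF this] show ?thesis by (simp add: F_int_def zero_ereal_def)
qed

lemma A_has_derivative:
  assumes FH: "F_hyps f" and s: "s > 0"
  shows "(A_fun f has_real_derivative (F_int f s + f s / s)) (at s)"
proof -
  define g where "g t = f t / t^2" for t :: real
  define c where "c = s/2"
  define e where "e = 2 * s"
  have c: "0 < c" "c < s" "s < e" using s by (auto simp: c_def e_def)
  have "((\<lambda>u. LBINT t=c..u. g t) has_vector_derivative g s) (at s within {c..e})"
    by (rule interval_integral_FTC2) (use c in \<open>auto simp: g_def intro: integrand_continuous[OF FH]\<close>)
  moreover have "at s within {c..e} = at s"
    by (rule at_within_interior) (use c in auto)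
  ultimately have "((\<lambda>u. LBINT t=c..u. g t) has_real_derivative g s) (at s)"
    by (simp add: has_real_derivative_iff_has_vector_derivative)
  then have "((\<lambda>u. F_int f c + (LBINT t=c..u. g t)) has_real_derivative g s) (at s)"
    using DERIV_add[OF DERIV_const] by fastforce
  then have dF: "(F_int f has_real_derivative g s) (at s)"
    by (rule has_field_derivative_transform_within_open[of _ _ _ "{c<..<e}"])
       (use c F_int_split[OF FH] in \<open>auto simp: g_def\<close>)
  have "((\<lambda>u. u * F_int f u) has_real_derivative (1 * F_int f s + g s * s)) (at s)"
    by (rule DERIV_mult[OF DERIV_ident dF])
  moreover have "A_fun f = (\<lambda>u. u * F_int f u)" by (auto simp: A_fun_def F_int_def fun_eq_iff)
  moreover have "1 * F_int f s + g s * s = F_int f s + f s / s" using s by (simp add: g_def power2_eq_square)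
  ultimately show ?thesis by simp
qed

lemma deriv_A_eq: "F_hyps f \<Longrightarrow> s > 0 \<Longrightarrow> deriv (A_fun f) s = F_int f s + f s / s"
  using A_has_derivative DERIV_imp_deriv by blast

lemma F_int_nonneg:
  assumes FH: "F_hyps f" and s: "s > 0"
  shows "F_int f s \<ge> 0"
proof -
  have f0: "\<forall>s\<ge>0. f s \<ge> 0" using FH by (simp add: F_hyps_def)
  show ?thesis unfolding F_int_Ioo[OF s] set_lebesgue_integral_def
    by (rule Bochner_Integration.integral_nonneg) (use f0 in \<open>auto simp: indicator_def\<close>)
qed

lemma F_int_mono:
  assumes FH: "F_hyps f" and s: "0 < s" "s \<le> S"
  shows "F_int f s \<le> F_int f S"
proof -
  have f0: "\<forall>s\<ge>0. f s \<ge> 0" using FH by (simp add: F_hyps_def)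
  have iS: "set_integrable lborel {0<..<S} (\<lambda>t. f t / t^2)" by (rule integrand_integrable[OF FH]) (use s in auto)
  have is0: "set_integrable lborel {0<..<s} (\<lambda>t. f t / t^2)" by (rule integrand_integrable[OF FH]) (use s in auto)
  have S0: "S > 0" using s by simp
  show ?thesis unfolding F_int_Ioo[OF s(1)] F_int_Ioo[OF S0]
    unfolding set_lebesgue_integral_def
  proof (rule integral_mono)
    show "integrable lborel (\<lambda>x. indicat_real {0<..<s} x *\<^sub>R (f x / x\<^sup>2))"
      using is0 by (simp add: set_integrable_def)
    show "integrable lborel (\<lambda>x. indicat_real {0<..<S} x *\<^sub>R (f x / x\<^sup>2))"
      using iS by (simp add: set_integrable_def)
    fix x :: real
    show "indicat_real {0<..<s} x *\<^sub>R (f x / x\<^sup>2) \<le> indicat_real {0<..<S} x *\<^sub>R (f x / x\<^sup>2)"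
      using f0 s by (auto simp: indicator_def)
  qed
qed

lemma F_int_small:
  assumes FH: "F_hyps f" and s: "0 < s" and le: "\<forall>t. 0 < t \<and> t < s \<longrightarrow> f t \<le> ep * t powr (4/3)"
    and ep: "ep \<ge> 0"
  shows "F_int f s \<le> ep * (3 * s powr (1/3))"
proof -
  have i1: "set_integrable lborel {0<..<s} (\<lambda>t. f t / t^2)" by (rule integrand_integrable[OF FH s])
  have i2: "set_integrable lborel {0<..<s} (\<lambda>t. ep * t powr (-2/3))"
    using set_integrable_mult_right[OF integral_powr_neg_two_thirds(1)[OF s], of ep] by simp
  have "F_int f s \<le> (LBINT t:{0<..<s}. ep * t powr (-2/3))"
    unfolding F_int_Ioo[OF s]
  proof (rule set_integral_mono[OF i1 i2])
    fix t assume "t \<in> {0<..<s}"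
    thus "f t / t^2 \<le> ep * t powr (-2/3)" using le by (intro integrand_small) auto
  qed
  also have "\<dots> = ep * (LBINT t:{0<..<s}. t powr (-2/3))" by (simp add: set_integral_mult_right)
  also have "(LBINT t:{0<..<s}. t powr (-2/3)) = 3 * s powr (1/3)"
    using integral_powr_neg_two_thirds(2)[OF s] s by (simp add: interval_integral_Ioo)
  finally show ?thesis .
qed

lemma f_over_s_small:
  fixes f :: "real \<Rightarrow> real"
  assumes "f s \<le> c * s powr (4/3)" "s > 0"
  shows "f s / s \<le> c * s powr (1/3)"
proof -
  have "f s / s \<le> c * s powr (4/3) / s" using assms by (simp add: divide_right_mono)
  also have "\<dots> = c * (s powr (4/3) / s powr 1)" using assms by simp
  also have "s powr (4/3) / s powr 1 = s powr (1/3)" using powr_diff[of s "4/3" 1] by simp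
  finally show ?thesis .
qed

lemma deriv_A_small_near_zero:
  assumes FH: "F_hyps f" and e: "\<epsilon> > 0"
  shows "\<exists>\<eta>>0. \<forall>s. 0 < s \<and> s < \<eta> \<longrightarrow> deriv (A_fun f) s < \<epsilon>"
proof -
  obtain \<delta> where d: "\<delta> > 0" "\<delta> \<le> 1" "\<forall>t. 0 < t \<and> t < \<delta> \<longrightarrow> f t \<le> (\<epsilon>/8) * t powr (4/3)"
    using f_small_near_zero[OF FH, of "\<epsilon>/8"] e by auto
  show ?thesis
  proof (intro exI[of _ \<delta>] conjI allI impI)
    fix s assume s: "0 < s \<and> s < \<delta>"
    have p1: "s powr (1/3) \<le> 1" by (rule powr_le1) (use s d in auto)
    have "F_int f s \<le> (\<epsilon>/8) * (3 * s powr (1/3))"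
      by (rule F_int_small[OF FH]) (use s d e in auto)
    also have "\<dots> \<le> (\<epsilon>/8) * 3" using p1 e by simp
    finally have A: "F_int f s \<le> 3 * \<epsilon> / 8" by simp
    have "f s / s \<le> (\<epsilon>/8) * s powr (1/3)" by (rule f_over_s_small) (use s d in auto)
    also have "\<dots> \<le> \<epsilon>/8" using p1 e by simp
    finally have B: "f s / s \<le> \<epsilon>/8" .
    have "deriv (A_fun f) s = F_int f s + f s / s" using deriv_A_eq[OF FH, of s] s by simp
    thus "deriv (A_fun f) s < \<epsilon>" using A B e by linarith
  qed (use d in auto)
qed

(* A' is bounded on (0,S]: F is monotone, and f(s)/s is small near 0 and bounded by f(S)/delta
   elsewhere. *)
lemma deriv_A_bounded:
  assumes FH: "F_hyps f" and S: "S > 0"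
  shows "\<exists>Bd. \<forall>s. 0 < s \<and> s \<le> S \<longrightarrow> deriv (A_fun f) s \<le> Bd"
proof -
  obtain \<delta> where d: "\<delta> > 0" "\<delta> \<le> 1" "\<forall>t. 0 < t \<and> t < \<delta> \<longrightarrow> f t \<le> 1 * t powr (4/3)"
    using f_small_near_zero[OF FH, of 1] by auto
  have f0: "\<forall>s\<ge>0. f s \<ge> 0" and sm: "strict_mono_on {0<..} f" using FH by (auto simp: F_hyps_def)
  show ?thesis
  proof (intro exI[of _ "F_int f S + 1 + f S / \<delta>"] allI impI)
    fix s assume s: "0 < s \<and> s \<le> S"
    have A: "F_int f s \<le> F_int f S" by (rule F_int_mono[OF FH]) (use s in auto)
    have B: "f s / s \<le> 1 + f S / \<delta>"
    proof (cases "s < \<delta>")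
      case True
      have "f s / s \<le> 1 * s powr (1/3)" by (rule f_over_s_small) (use s d True in auto)
      also have "\<dots> \<le> 1" using powr_le1[of "1/3" s] s True d by simp
      finally have "f s / s \<le> 1" .
      moreover have "0 \<le> f S / \<delta>" using f0 S d by simp
      ultimately show ?thesis by linarith
    next
      case False
      have fs: "f s \<le> f S"
      proof (cases "s = S")
        case False
        hence "s < S" using s by simp
        thus ?thesis using strict_mono_onD[OF sm, of s S] s by auto
      qed simp
      have "f s / s \<le> f S / s" using fs s by (simp add: divide_right_mono)
      also have "\<dots> \<le> f S / \<delta>" using False s d f0 S by (intro divide_left_mono) auto
      finally show ?thesis by simp
    qed
    show "deriv (A_fun f) s \<le> F_int f S + 1 + f S / \<delta>" using deriv_A_eq[OF FH, of s] s A B by simp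
  qed
qed

lemma deriv_A_lower:
  assumes FH: "F_hyps f" and s: "s > 0"
  shows "f s / s \<le> deriv (A_fun f) s"
  using deriv_A_eq[OF FH s] F_int_nonneg[OF FH s] by simp

lemma cyl_r_along_ray:
  fixes x :: pt and t :: real
  assumes "0 \<le> t"
  shows "cyl_r (x + t *\<^sub>R vector [x$1, x$2, 0]) = (1 + t) * cyl_r x"
proof -
  have "cyl_r (x + t *\<^sub>R vector [x$1, x$2, 0]) = sqrt ((1 + t)^2 * ((x$1)^2 + (x$2)^2))"
    unfolding cyl_r_def by (simp add: algebra_simps power2_eq_square)
  also have "\<dots> = (1 + t) * cyl_r x" using assms by (simp add: real_sqrt_mult cyl_r_def)
  finally show ?thesis .
qed

lemma centrifugal_growth:
  fixes \<Omega> r t :: real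
  assumes "1 \<le> \<Omega>" "0 \<le> t"
  shows "\<Omega>^2 * r^2 \<le> \<Omega>^2 * ((1 + t) * r)^2" and "t * r^2 \<le> \<Omega>^2 * ((1 + t) * r)^2"
proof -
  have sq: "((1 + t) * r)^2 = (1 + 2*t + t^2) * r^2" by (simp add: power2_eq_square algebra_simps)
  have "1 \<le> 1 + 2*t + t^2" "t \<le> 1 + 2*t + t^2" using assms by (simp_all add: add_increasing)
  then have r: "r^2 \<le> ((1 + t) * r)^2" and tr: "t * r^2 \<le> ((1 + t) * r)^2"
    unfolding sq using mult_right_mono[of _ _ "r^2"] by (metis mult_1 zero_le_power2)+
  have "1 \<le> \<Omega>^2" using assms by (simp add: one_le_power)
  then have "((1 + t) * r)^2 \<le> \<Omega>^2 * ((1 + t) * r)^2"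
    by (simp add: mult_le_cancel_right1)
  with r tr show "\<Omega>^2 * r^2 \<le> \<Omega>^2 * ((1 + t) * r)^2" and "t * r^2 \<le> \<Omega>^2 * ((1 + t) * r)^2"
    by (auto intro: mult_left_mono order_trans)
qed

(* A continuous non-negative function on [0,oo), positive at 0, is either positive everywhere or,
   by the intermediate value theorem, takes arbitrarily small positive values. *)
lemma positive_or_small_values:
  fixes g :: "real \<Rightarrow> real"
  assumes cont: "continuous_on {0..} g" and nn: "\<forall>t\<ge>0. 0 \<le> g t" and g0: "0 < g 0"
  obtains "\<forall>t\<ge>0. 0 < g t" | "\<forall>\<eta>>0. \<exists>t\<ge>0. 0 < g t \<and> g t < \<eta>"
proof (cases "\<forall>t\<ge>0. 0 < g t")
  case False
  then obtain t0 where t0: "0 \<le> t0" "g t0 = 0" using nn by (force simp: not_less)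
  have "\<exists>t\<ge>0. 0 < g t \<and> g t < \<eta>" if \<eta>: "0 < \<eta>" for \<eta>
  proof -
    define v where "v = min \<eta> (g 0) / 2"
    have v: "0 < v" "v < \<eta>" "v \<le> g 0" using \<eta> g0 by (auto simp: v_def)
    have "continuous_on {0..t0} g" by (rule continuous_on_subset[OF cont]) auto
    then obtain t where "0 \<le> t" "g t = v" using IVT2'[of g t0 v 0] t0 v by auto
    with v show ?thesis by auto
  qed
  then show ?thesis using that(2) by blast
qed (use that(1) in blast)

(* On the support, off the axis, the centrifugal part of the Euler-Lagrange equation is
   non-positive.  Otherwise A'(rho) >= c > 0 along the outward ray: if rho stays positive this
   contradicts the boundedness of A' (the centrifugal term grows), and otherwise rho takes small
   positive values, where A' < c. *)
lemma centrifugal_bound_off_axis: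
  fixes K :: "pt set" and \<rho> P :: "pt \<Rightarrow> real"
  assumes FH: "F_hyps f" and notrap: "no_trapping K"
    and nn: "\<forall>y\<in>-K. 0 \<le> \<rho> y" and ub: "\<forall>y\<in>-K. \<rho> y \<le> S" and S: "0 < S"
    and cont: "continuous_on (-K) \<rho>"
    and EL: "\<forall>y\<in>-K. 0 < \<rho> y \<longrightarrow> deriv (A_fun f) (\<rho> y) = lam + (1/2) * \<Omega>^2 * (cyl_r y)^2 + P y"
    and P: "\<forall>y. 0 \<le> P y" and \<Omega>: "1 \<le> \<Omega>"
    and x: "x \<in> -K" "0 < \<rho> x" "0 < cyl_r x"
  shows "lam + (1/2) * \<Omega>^2 * (cyl_r x)^2 \<le> 0"
proof (rule ccontr)
  define r where "r = cyl_r x"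
  define c where "c = lam + (1/2) * \<Omega>^2 * r^2"
  assume "\<not> ?thesis"
  then have c: "0 < c" by (simp add: c_def r_def)
  have r: "0 < r" using x by (simp add: r_def)
  define p where "p t = x + t *\<^sub>R vector [x$1, x$2, 0]" for t :: real
  have p_out: "p t \<in> -K" if "0 \<le> t" for t
    using notrap x that unfolding no_trapping_def p_def by auto
  have p_cont: "continuous_on {0..} (\<lambda>t. \<rho> (p t))"
    by (rule continuous_on_compose2[OF cont]) (use p_out in \<open>auto simp: p_def intro!: continuous_intros\<close>)
  have along: "lam + (1/2) * \<Omega>^2 * ((1 + t) * r)^2 \<le> deriv (A_fun f) (\<rho> (p t))"
    if "0 \<le> t" "0 < \<rho> (p t)" for t
    using EL p_out[OF that(1)] that P cyl_r_along_ray[OF that(1), of x] by (force simp: p_def r_def)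
  have "\<forall>t\<ge>0. 0 \<le> \<rho> (p t)" "0 < \<rho> (p 0)" using nn p_out x by (auto simp: p_def)
  with p_cont show False
  proof (rule positive_or_small_values)
    assume positive: "\<forall>t\<ge>0. 0 < \<rho> (p t)"
    obtain B where B: "\<forall>s. 0 < s \<and> s \<le> S \<longrightarrow> deriv (A_fun f) s \<le> B"
      using deriv_A_bounded[OF FH S] by blast
    define t where "t = 2 * (\<bar>B\<bar> + \<bar>lam\<bar> + 1) / r^2"
    have t: "0 \<le> t" "(1/2) * (t * r^2) = \<bar>B\<bar> + \<bar>lam\<bar> + 1" using r by (auto simp: t_def)
    have "lam + (1/2) * (t * r^2) \<le> lam + (1/2) * \<Omega>^2 * ((1 + t) * r)^2"
      using centrifugal_growth(2)[OF \<Omega> t(1), of r] by simp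
    also have "\<dots> \<le> deriv (A_fun f) (\<rho> (p t))" using along[of t] positive t by simp
    also have "\<dots> \<le> B" using B positive ub p_out t by auto
    finally show False unfolding t(2) by arith
  next
    assume small: "\<forall>\<eta>>0. \<exists>t\<ge>0. 0 < \<rho> (p t) \<and> \<rho> (p t) < \<eta>"
    obtain \<eta> where \<eta>: "0 < \<eta>" "\<forall>s. 0 < s \<and> s < \<eta> \<longrightarrow> deriv (A_fun f) s < c"
      using deriv_A_small_near_zero[OF FH c] by blast
    then obtain t where t: "0 \<le> t" "0 < \<rho> (p t)" "\<rho> (p t) < \<eta>" using small by blast
    have "c \<le> lam + (1/2) * \<Omega>^2 * ((1 + t) * r)^2"
      using centrifugal_growth(1)[OF \<Omega> t(1), of r] by (simp add: c_def)
    also have "\<dots> \<le> deriv (A_fun f) (\<rho> (p t))" using along t by blast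
    also have "\<dots> < c" using \<eta> t by blast
    finally show False by simp
  qed
qed

(* The axis is a null set, so a density of positive mass charges points off the axis. *)
lemma positive_mass_off_axis:
  fixes \<rho> :: "pt \<Rightarrow> real" and U :: "pt set"
  assumes mass: "(LINT y:U|lebesgue. \<rho> y) = M" and M: "0 < M" and nn: "\<forall>y\<in>U. 0 \<le> \<rho> y"
  shows "\<exists>y\<in>U. 0 < \<rho> y \<and> 0 < cyl_r y"
proof (rule ccontr)
  assume "\<not> ?thesis"
  then have on_axis: "y $ 1 = 0" if "y \<in> U" "\<rho> y \<noteq> 0" for y
    using that nn by (force simp: cyl_r_def less_le sum_power2_eq_zero_iff)
  have "{y :: pt. axis 1 1 \<bullet> y = 0} \<in> null_sets lebesgue"
    using negligible_hyperplane[of "axis 1 (1::real)" 0] by (simp add: negligible_iff_null_sets axis_eq_0_iff)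
  then have "AE y in lebesgue. indicator U y *\<^sub>R \<rho> y = 0"
    by (rule AE_I') (auto simp: inner_axis' on_axis indicator_def)
  then have "M = 0" using mass by (simp add: set_lebesgue_integral_def integral_eq_zero_AE)
  with M show False by simp
qed

(* Hence lam <= 0, and the centrifugal part is non-positive on the whole support. *)
lemma centrifugal_nonpos:
  fixes K :: "pt set" and \<rho> P :: "pt \<Rightarrow> real"
  assumes FH: "F_hyps f" and notrap: "no_trapping K"
    and nn: "\<forall>y\<in>-K. 0 \<le> \<rho> y" and ub: "\<forall>y\<in>-K. \<rho> y \<le> S" and S: "0 < S"
    and cont: "continuous_on (-K) \<rho>"
    and mass: "(LINT y:(-K)|lebesgue. \<rho> y) = M"
    and M: "0 < M"
    and EL: "\<forall>y\<in>-K. 0 < \<rho> y \<longrightarrow> deriv (A_fun f) (\<rho> y) = lam + (1/2) * \<Omega>^2 * (cyl_r y)^2 + P y"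
    and P: "\<forall>y. 0 \<le> P y" and \<Omega>: "1 \<le> \<Omega>"
    and y: "y \<in> -K" "0 < \<rho> y"
  shows "lam + (1/2) * \<Omega>^2 * (cyl_r y)^2 \<le> 0"
proof (cases "0 < cyl_r y")
  case True
  then show ?thesis by (rule centrifugal_bound_off_axis[OF FH notrap nn ub S cont EL P \<Omega> y])
next
  case False
  moreover have "0 \<le> cyl_r y" by (simp add: cyl_r_def)
  ultimately have "cyl_r y = 0" by simp
  obtain y0 where y0: "y0 \<in> -K" "0 < \<rho> y0" "0 < cyl_r y0"
    using positive_mass_off_axis[OF mass M nn] by blast
  have "lam \<le> lam + (1/2) * \<Omega>^2 * (cyl_r y0)^2" by simp
  also have "\<dots> \<le> 0" by (rule centrifugal_bound_off_axis[OF FH notrap nn ub S cont EL P \<Omega> y0])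
  finally show ?thesis using \<open>cyl_r y = 0\<close> by simp
qed

lemma growth_forces_bound:
  fixes S s cB C :: real and f :: "real \<Rightarrow> real"
  assumes S: "0 < S" and s: "S/2 < s" "s \<le> S"
    and growth: "2 powr (1/3) * (cB + 1) \<le> f s / s powr (4/3)" and cB: "0 \<le> cB"
    and upper: "f s / s \<le> cB * S powr (1/3) + C"
  shows "S \<le> (max C 1)^3"
proof -
  have s0: "0 < s" using S s by simp
  have split: "f s / s = (f s / s powr (4/3)) * s powr (1/3)"
    using powr_add[of s 1 "1/3"] s0 by simp
  have "(S/2) powr (1/3) \<le> s powr (1/3)" using s S by (intro powr_mono2) auto
  moreover have "0 \<le> 2 powr (1/3) * (cB + 1)" using cB by simp
  ultimately have "(2 powr (1/3) * (cB + 1)) * (S/2) powr (1/3) \<le> (f s / s powr (4/3)) * s powr (1/3)"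
    using growth by (intro mult_mono) auto
  moreover have "2 powr (1/3) * (S/2) powr (1/3) = S powr (1/3)"
    using S by (simp flip: powr_mult)
  ultimately have "(cB + 1) * S powr (1/3) \<le> f s / s"
    unfolding split by (simp add: algebra_simps)
  with upper have "S powr (1/3) \<le> max C 1" by (simp add: algebra_simps)
  then have "(S powr (1/3))^3 \<le> (max C 1)^3" by (intro power_mono) auto
  moreover have "(S powr (1/3))^3 = S" using S by (simp add: powr_powr flip: powr_realpow)
  ultimately show ?thesis by simp
qed

(* The key estimate at a point of the support, for a density bounded by S: the Euler-Lagrange
   equation, A' >= f(s)/s, the sign of the centrifugal term and the potential bounds give
   f(rho)/rho <= B rho + Phi_K <= C M^(2/3) S^(1/3) + CK. *)
lemma support_point_estimate:
  fixes K :: "pt set" and \<rho> \<rho>K :: "pt \<Rightarrow> real"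
  assumes FH: "F_hyps f" and notrap: "no_trapping K" and \<Omega>: "1 \<le> \<Omega>"
    and nn: "\<forall>y\<in>-K. 0 \<le> \<rho> y" and ub: "\<forall>y\<in>-K. \<rho> y \<le> S" and S: "0 < S"
    and cont: "continuous_on (-K) \<rho>"
    and int: "set_integrable lebesgue (-K) \<rho>" and mass: "(LINT y:(-K)|lebesgue. \<rho> y) = M"
    and M: "0 < M"
    and EL: "\<forall>y\<in>-K. 0 < \<rho> y \<longrightarrow> deriv (A_fun f) (\<rho> y) - newton_pot (-K) \<rho> y
              - (1/2) * \<Omega>^2 * (cyl_r y)^2 - newton_pot K \<rho>K y = lam"
    and \<rho>K: "\<forall>y\<in>K. 0 \<le> \<rho>K y" and CK: "\<forall>y. newton_pot K \<rho>K y \<le> CK"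
    and y: "y \<in> -K" "0 < \<rho> y"
  shows "f (\<rho> y) / \<rho> y \<le> (kernel_const 3 1 + 1) * M powr (2/3) * S powr (1/3) + CK"
proof -
  define P where "P y = newton_pot (-K) \<rho> y + newton_pot K \<rho>K y" for y
  have EL': "\<forall>y\<in>-K. 0 < \<rho> y \<longrightarrow> deriv (A_fun f) (\<rho> y) = lam + (1/2) * \<Omega>^2 * (cyl_r y)^2 + P y"
    using EL by (auto simp: P_def algebra_simps)
  have P: "\<forall>y. 0 \<le> P y" using newton_pot_nonneg[OF nn] newton_pot_nonneg[OF \<rho>K] by (simp add: P_def)
  have "f (\<rho> y) / \<rho> y \<le> deriv (A_fun f) (\<rho> y)" by (rule deriv_A_lower[OF FH y(2)])
  also have "\<dots> = lam + (1/2) * \<Omega>^2 * (cyl_r y)^2 + P y" using EL' y by blast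
  also have "\<dots> \<le> P y"
    using centrifugal_nonpos[OF FH notrap nn ub S cont mass M EL' P \<Omega> y] by simp
  also have "\<dots> \<le> (kernel_const 3 1 + 1) * M powr (2/3) * S powr (1/3) + CK"
    unfolding P_def using newton_pot_sup_mass_bound[OF nn ub S int mass M, of y] CK
    by (intro add_mono) (simp_all add: mult_ac)
  finally show ?thesis .
qed

(* The uniform bound for a single admissible density: either sup rho is below the threshold
   2T beyond which f grows fast, or the estimate at a near-maximal point bounds sup rho by
   (max CK 1)^3. *)
lemma density_sup_bound:
  fixes K :: "pt set" and \<rho> \<rho>K :: "pt \<Rightarrow> real"
  assumes FH: "F_hyps f" and notrap: "no_trapping K" and \<Omega>: "1 \<le> \<Omega>"
    and nn: "\<forall>y\<in>-K. 0 \<le> \<rho> y" and bdd: "bounded (\<rho> ` (-K))" and cont: "continuous_on (-K) \<rho>"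
    and int: "set_integrable lebesgue (-K) \<rho>" and mass: "(LINT y:(-K)|lebesgue. \<rho> y) = M"
    and M: "0 < M"
    and EL: "\<forall>y\<in>-K. 0 < \<rho> y \<longrightarrow> deriv (A_fun f) (\<rho> y) - newton_pot (-K) \<rho> y
              - (1/2) * \<Omega>^2 * (cyl_r y)^2 - newton_pot K \<rho>K y = lam"
    and \<rho>K: "\<forall>y\<in>K. 0 \<le> \<rho>K y" and CK: "\<forall>y. newton_pot K \<rho>K y \<le> CK"
    and T: "\<forall>s\<ge>T. 2 powr (1/3) * ((kernel_const 3 1 + 1) * M powr (2/3) + 1) \<le> f s / s powr (4/3)"
    and x: "x \<in> -K"
  shows "\<rho> x \<le> max (2 * max T 1) ((max CK 1)^3)"
proof -
  define S where "S = Sup (\<rho> ` (-K))"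
  have ub: "\<forall>y\<in>-K. \<rho> y \<le> S"
    unfolding S_def using bounded_imp_bdd_above[OF bdd] by (auto intro: cSup_upper)
  have "S \<le> max (2 * max T 1) ((max CK 1)^3)"
  proof (cases "S \<le> 2 * max T 1")
    case False
    then have S: "0 < S" by linarith
    have "\<exists>v\<in>\<rho> ` (-K). S/2 < v"
      using less_cSup_iff[of "\<rho> ` (-K)" "S/2"] x bounded_imp_bdd_above[OF bdd] S by (auto simp: S_def)
    then obtain y where y: "y \<in> -K" "S/2 < \<rho> y" by blast
    have y_le: "\<rho> y \<le> S" and y_pos: "0 < \<rho> y" and y_T: "T \<le> \<rho> y"
      using ub y S False by auto
    have "S \<le> (max CK 1)^3"
    proof (rule growth_forces_bound[OF S y(2) y_le])
      show "2 powr (1/3) * ((kernel_const 3 1 + 1) * M powr (2/3) + 1) \<le> f (\<rho> y) / \<rho> y powr (4/3)"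
        using T y_T by blast
      show "0 \<le> (kernel_const 3 1 + 1) * M powr (2/3)" using kernel_const_pos[of 1 3] by simp
    qed (rule support_point_estimate[OF FH notrap \<Omega> nn ub S cont int mass M EL \<rho>K CK y(1) y_pos])
    then show ?thesis by simp
  qed simp
  moreover have "\<rho> x \<le> S" using ub x by blast
  ultimately show ?thesis by linarith
qed

theorem mainTheorem13:
  fixes K :: "pt set" and f :: "real \<Rightarrow> real" and \<rho>K :: "pt \<Rightarrow> real"
    and q M :: real
  assumes K_domain: "open K" "connected K" "bounded K"
    and K_axisym: "axisym_set K"
    and K_notrap: "no_trapping K"
    and f_hyps: "F_hyps f"
    and q_gt: "q > 3"
    and \<rho>K_Lq: "in_Lq q K \<rho>K"
    and \<rho>K_nonneg: "\<forall>y\<in>K. \<rho>K y \<ge> 0"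
    and \<rho>K_axisym: "axisym_fun_on K \<rho>K"
    and M_pos: "M > 0"
  shows "\<exists>C1>0. \<forall>(\<Omega>::real) (\<rho>::pt \<Rightarrow> real) (lam::real).
           \<Omega> \<ge> 1
         \<and> (\<forall>x\<in>-K. \<rho> x \<ge> 0)
         \<and> bounded (\<rho> ` (-K))
         \<and> continuous_on (-K) \<rho>
         \<and> set_integrable lebesgue (-K) \<rho>
         \<and> (LINT y:(-K)|lebesgue. \<rho> y) = M
         \<and> (\<forall>x\<in>-K. \<rho> x > 0 \<longrightarrow>
              deriv (A_fun f) (\<rho> x) - newton_pot (-K) \<rho> x
                - (1/2) * \<Omega>^2 * (cyl_r x)^2 - newton_pot K \<rho>K x = lam)
         \<longrightarrow> (\<forall>x\<in>-K. \<rho> x \<le> C1)"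
proof -
  obtain CK where CK: "\<forall>x. newton_pot K \<rho>K x \<le> CK"
    using newton_pot_Lq_bounded[OF K_domain(3) q_gt \<rho>K_Lq \<rho>K_nonneg] by blast
  have "filterlim (\<lambda>s. f s / s powr (4/3)) at_top at_top" using f_hyps by (simp add: F_hyps_def)
  then obtain T where T: "\<forall>s\<ge>T. 2 powr (1/3) * ((kernel_const 3 1 + 1) * M powr (2/3) + 1) \<le> f s / s powr (4/3)"
    by (auto simp: filterlim_at_top eventually_at_top_linorder)
  show ?thesis
    by (intro exI[of _ "max (2 * max T 1) ((max CK 1)^3)"] conjI allI impI ballI)
       (auto intro: density_sup_bound[OF f_hyps K_notrap _ _ _ _ _ _ M_pos _ \<rho>K_nonneg CK T])
qed

end
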